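(* Under the setup below, fix $K=(k_1,\dots,k_r)$ and two distinct ordered tuples $L,L'$ of $r$ distinct target indices in $[d]$. Let $M_{L,L'}(y)$ be the $\binom{2r-1}{r}\times2$ matrix whose rows are indexed by all $\alpha\in\mathbb N^r$ with $|\alpha|=r$ and whose row $\alpha$ is $(D_{\alpha,L}(y),D_{\alpha,L'}(y))$. Then all $2\times2$ minors of $M_{L,L'}(y)$ are homogeneous polynomials of degree $2r$ vanishing on the attention variety.
   Context: Setup: $d'=1$, $t>1$, $Q,K\in\mathbb R^{a\times d}$, $V\in\mathbb R^{1\times d}$ with row $v$, $A=K^\top Q$, $\varphi_W(X)=VX(X^\top AX)$, $X=(x_{kn})\in\mathbb R^{d\times t}$; fix $j\in[t]$, $n\ne j$, and $2\le r\le\min(a,d)$; $k_1,\dots,k_r$ are distinct elements of $[d]$. $y_{n,j}(\mathcal A,b)$ denotes the coefficient of $(\prod_{u\in\mathcal A}x_{un})x_{bj}$ in $\varphi_W(X)[1,j]$ divided by the number of distinct orderings of the size-2 multiset $\mathcal A$; $\omega(u,w)=1$ if $u=w$, $2$ otherwise. For $\alpha\in\mathbb N^r$ with $|\alpha|=r$, choose $f:[r]\to[r]$ with $|f^{-1}(m)|=\alpha_m$ whose only directed cycles are fixed points, and for a tuple $L=(l_1,\dots,l_r)$ of distinct indices set $D_{\alpha,L}(y)=\det\big(\omega(k_{f(p)},k_p)\,y_{n,j}(\{k_{f(p)},k_p\},l_q)\big)_{p,q=1}^r$; on $\mu(W)$ this equals $(\prod_m v_{k_m}^{\alpha_m})\det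 A_{K,L}$. $\mu$ maps $W$ to all scaled coefficients; the attention variety is the Zariski closure of $\operatorname{im}\mu$. *)

theory Defs
  imports "HOL-Library.Poly_Mapping" "Jordan_Normal_Form.Determinant"
begin

type_synonym 'v rpoly = "('v \<Rightarrow>\<^sub>0 nat) \<Rightarrow>\<^sub>0 real"

definition pvar :: "'v \<Rightarrow> 'v rpoly" where
  "pvar x = Poly_Mapping.single (Poly_Mapping.single x 1) 1"

definition pconst :: "real \<Rightarrow> 'v rpoly" where
  "pconst c = Poly_Mapping.single 0 c"

definition peval :: "('v \<Rightarrow> real) \<Rightarrow> 'v rpoly \<Rightarrow> real" where
  "peval z P = (\<Sum>m\<in>Poly_Mapping.keys P.
       Poly_Mapping.lookup P m * (\<Prod>x\<in>Poly_Mapping.keys m. z x ^ Poly_Mapping.lookup m x))"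

definition mdeg :: "('v \<Rightarrow>\<^sub>0 nat) \<Rightarrow> nat" where
  "mdeg m = (\<Sum>x\<in>Poly_Mapping.keys m. Poly_Mapping.lookup m x)"

definition homogeneous_of_degree :: "nat \<Rightarrow> 'v rpoly \<Rightarrow> bool" where
  "homogeneous_of_degree deg P \<longleftrightarrow> (\<forall>m\<in>Poly_Mapping.keys P. mdeg m = deg)"

definition zariski_closure :: "('v \<Rightarrow> real) set \<Rightarrow> ('v \<Rightarrow> real) set" where
  "zariski_closure S = {z. \<forall>P. (\<forall>w\<in>S. peval w P = 0) \<longrightarrow> peval z P = 0}"

text \<open>Indices are 0-based: [a] = {0..<a}, [d] = {0..<d}, [t] = {0..<t}.
  Q, K : a \<times> d matrices (functions nat \<Rightarrow> nat \<Rightarrow> real, Q i k = Q[i,k]);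
  V = row vector v : nat \<Rightarrow> real.  The entries of X are the variables (k, n) = x_{kn}.\<close>

definition Amat :: "nat \<Rightarrow> (nat \<Rightarrow> nat \<Rightarrow> real) \<Rightarrow> (nat \<Rightarrow> nat \<Rightarrow> real) \<Rightarrow> nat \<Rightarrow> nat \<Rightarrow> real" where
  "Amat a Q K p q = (\<Sum>i<a. K i p * Q i q)"

text \<open>phi_W(X)[1,j] = sum_m (V X)[1,m] * (X^T A X)[m,j], as a polynomial in the x_{kn}.\<close>
definition phi_poly :: "nat \<Rightarrow> nat \<Rightarrow> nat \<Rightarrow> (nat \<Rightarrow> nat \<Rightarrow> real) \<Rightarrow> (nat \<Rightarrow> nat \<Rightarrow> real)
    \<Rightarrow> (nat \<Rightarrow> real) \<Rightarrow> nat \<Rightarrow> (nat \<times> nat) rpoly" where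
  "phi_poly a d t Q K v j =
     (\<Sum>m<t. (\<Sum>u<d. pconst (v u) * pvar (u, m)) *
            (\<Sum>p<d. \<Sum>q<d. pvar (p, m) * pconst (Amat a Q K p q) * pvar (q, j)))"

definition orderings :: "nat \<Rightarrow> ((nat \<times> nat) \<Rightarrow>\<^sub>0 nat) \<Rightarrow> nat" where
  "orderings j mo =
     fact (\<Sum>x\<in>{x\<in>Poly_Mapping.keys mo. snd x \<noteq> j}. Poly_Mapping.lookup mo x)
     div (\<Prod>x\<in>{x\<in>Poly_Mapping.keys mo. snd x \<noteq> j}. fact (Poly_Mapping.lookup mo x))"

text \<open>Coordinates of the ambient space: pairs (j, mo) = coefficient of monomial mo in
  the output entry phi_W(X)[1,j].  mu(W) lists all scaled coefficients.\<close>
type_synonym coord = "nat \<times> ((nat \<times> nat) \<Rightarrow>\<^sub>0 nat)"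

definition mu :: "nat \<Rightarrow> nat \<Rightarrow> nat \<Rightarrow> (nat \<Rightarrow> nat \<Rightarrow> real) \<Rightarrow> (nat \<Rightarrow> nat \<Rightarrow> real)
    \<Rightarrow> (nat \<Rightarrow> real) \<Rightarrow> coord \<Rightarrow> real" where
  "mu a d t Q K v c = (case c of (j, mo) \<Rightarrow>
      if j < t then Poly_Mapping.lookup (phi_poly a d t Q K v j) mo / real (orderings j mo)
      else 0)"

definition attention_variety :: "nat \<Rightarrow> nat \<Rightarrow> nat \<Rightarrow> (coord \<Rightarrow> real) set" where
  "attention_variety a d t =
     zariski_closure (range (\<lambda>(Q, K, v). mu a d t Q K v))"

text \<open>The coordinate y_{n,j}({u,w}, b): the monomial x_{un} x_{wn} x_{bj}.\<close>
definition ycoord :: "nat \<Rightarrow> nat \<Rightarrow> nat \<Rightarrow> nat \<Rightarrow> nat \<Rightarrow> coord" where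
  "ycoord n j u w b = (j, Poly_Mapping.single (u, n) 1 + Poly_Mapping.single (w, n) 1
                          + Poly_Mapping.single (b, j) 1)"

definition omega :: "nat \<Rightarrow> nat \<Rightarrow> real" where
  "omega u w = (if u = w then 1 else 2)"

definition admissible_f :: "nat \<Rightarrow> (nat \<Rightarrow> nat) \<Rightarrow> (nat \<Rightarrow> nat) \<Rightarrow> bool" where
  "admissible_f r alpha f \<longleftrightarrow>
     (\<forall>p<r. f p < r) \<and>
     (\<forall>m<r. card {p. p < r \<and> f p = m} = alpha m) \<and>
     (\<forall>p<r. \<forall>l>0. (f ^^ l) p = p \<longrightarrow> f p = p)"

text \<open>D_{alpha,L}(y) as a polynomial in the coordinates (with f the chosen map for alpha).\<close>
definition Dpoly :: "nat \<Rightarrow> nat \<Rightarrow> nat \<Rightarrow> (nat \<Rightarrow> nat) \<Rightarrow> (nat \<Rightarrow> nat) \<Rightarrow> (nat \<Rightarrow> nat) \<Rightarrow> coord rpoly" where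
  "Dpoly n j r k f L = det (mat r r (\<lambda>(p, q).
      pconst (omega (k (f p)) (k p)) * pvar (ycoord n j (k (f p)) (k p) (L q))))"

definition multiidx :: "nat \<Rightarrow> (nat \<Rightarrow> nat) set" where
  "multiidx r = {alpha. (\<forall>m\<ge>r. alpha m = 0) \<and> (\<Sum>m<r. alpha m) = r}"

end

theory Submission
  imports Defs "HOL-Combinatorics.Cycles"
begin

text \<open>On the image of \<open>\<mu>\<close>, the weighted coordinate \<open>\<omega>(u,w) y({u,w},b)\<close> equals
  \<open>v\<^sub>u A\<^sub>w\<^sub>b + v\<^sub>w A\<^sub>u\<^sub>b\<close> (only \<open>v\<^sub>u A\<^sub>u\<^sub>b\<close> if \<open>u = w\<close>).
  Hence the matrix whose determinant is \<open>D\<^sub>\<alpha>\<^sub>,\<^sub>L\<close> factors as \<open>T \<cdot> A\<^sub>K\<^sub>,\<^sub>L\<close>, where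
  row \<open>p\<close> of \<open>T\<close> has \<open>v\<^sub>k\<^sub>(\<^sub>f\<^sub>p\<^sub>)\<close> on the diagonal and \<open>v\<^sub>k\<^sub>p\<close> in column \<open>f p\<close>.
  A permutation that moves every point along \<open>f\<close> or fixes it would carry a nontrivial cycle
  of \<open>f\<close>; as \<open>f\<close> has none, only the identity contributes to \<open>det T\<close>, which is therefore
  the product of the diagonal. So \<open>D\<^sub>\<alpha>\<^sub>,\<^sub>L = c\<^sub>\<alpha> det A\<^sub>K\<^sub>,\<^sub>L\<close> on the image of \<open>\<mu>\<close>:
  there the matrix \<open>M\<^sub>L\<^sub>,\<^sub>L\<^sub>'\<close> has rank at most one, so its \<open>2\<times>2\<close> minors vanish on the
  image and hence on its Zariski closure.\<close>

section \<open>Evaluation of polynomials\<close>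

definition monomial_value :: "('v \<Rightarrow> real) \<Rightarrow> ('v \<Rightarrow>\<^sub>0 nat) \<Rightarrow> real" where
  "monomial_value z m = (\<Prod>x\<in>Poly_Mapping.keys m. z x ^ Poly_Mapping.lookup m x)"

lemma peval_eq_sum_monomial_value:
  "peval z P = (\<Sum>m\<in>Poly_Mapping.keys P. Poly_Mapping.lookup P m * monomial_value z m)"
  unfolding peval_def monomial_value_def ..

lemma monomial_value_superset:
  assumes "finite S" "Poly_Mapping.keys m \<subseteq> S"
  shows "monomial_value z m = (\<Prod>x\<in>S. z x ^ Poly_Mapping.lookup m x)"
  unfolding monomial_value_def
  by (rule prod.mono_neutral_left) (use assms in \<open>auto simp: in_keys_iff\<close>)

lemma monomial_value_add: "monomial_value z (m + m') = monomial_value z m * monomial_value z m'"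
proof -
  let ?S = "Poly_Mapping.keys m \<union> Poly_Mapping.keys m'"
  have "monomial_value z (m + m') = (\<Prod>x\<in>?S. z x ^ Poly_Mapping.lookup (m + m') x)"
    by (rule monomial_value_superset) (use keys_add[of m m'] in auto)
  also have "\<dots> = (\<Prod>x\<in>?S. z x ^ Poly_Mapping.lookup m x) * (\<Prod>x\<in>?S. z x ^ Poly_Mapping.lookup m' x)"
    by (simp add: lookup_add power_add prod.distrib)
  also have "\<dots> = monomial_value z m * monomial_value z m'"
    by (subst (1 2) monomial_value_superset[where S = ?S]) auto
  finally show ?thesis .
qed

lemma monomial_value_zero [simp]: "monomial_value z 0 = 1"
  unfolding monomial_value_def by simp

lemma peval_zero [simp]: "peval z 0 = 0"
  unfolding peval_def by simp

lemma peval_one: "peval z 1 = 1"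
  unfolding peval_eq_sum_monomial_value by simp

lemma peval_single: "peval z (Poly_Mapping.single m c) = c * monomial_value z m"
  unfolding peval_eq_sum_monomial_value by auto

lemma peval_add: "peval z (P + P') = peval z P + peval z P'"
  unfolding peval_def by (rule setsum_keys_plus_distrib) (auto simp: algebra_simps)

lemma peval_sum: "peval z (\<Sum>i\<in>I. P i) = (\<Sum>i\<in>I. peval z (P i))"
  by (induction I rule: infinite_finite_induct) (auto simp: peval_add)

lemma sum_single_lookup:
  "(\<Sum>m\<in>Poly_Mapping.keys P. Poly_Mapping.single m (Poly_Mapping.lookup P m)) = P"
proof (rule poly_mapping_eqI)
  fix x
  show "Poly_Mapping.lookup (\<Sum>m\<in>Poly_Mapping.keys P. Poly_Mapping.single m (Poly_Mapping.lookup P m)) x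
        = Poly_Mapping.lookup P x"
    by (cases "x \<in> Poly_Mapping.keys P") (auto simp: lookup_sum lookup_single when_def in_keys_iff)
qed

lemma peval_mult: "peval z (P * P') = peval z P * peval z (P' :: 'v rpoly)"
proof -
  have "P * P' = (\<Sum>m\<in>Poly_Mapping.keys P. Poly_Mapping.single m (Poly_Mapping.lookup P m))
              * (\<Sum>m\<in>Poly_Mapping.keys P'. Poly_Mapping.single m (Poly_Mapping.lookup P' m))"
    by (simp only: sum_single_lookup)
  also have "\<dots> = (\<Sum>m\<in>Poly_Mapping.keys P. \<Sum>m'\<in>Poly_Mapping.keys P'.
       Poly_Mapping.single (m + m') (Poly_Mapping.lookup P m * Poly_Mapping.lookup P' m'))"
    by (simp add: sum_product mult_single)
  finally have "peval z (P * P') = (\<Sum>m\<in>Poly_Mapping.keys P. \<Sum>m'\<in>Poly_Mapping.keys P'.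
       Poly_Mapping.lookup P m * Poly_Mapping.lookup P' m' * monomial_value z (m + m'))"
    by (simp add: peval_sum peval_single)
  also have "\<dots> = peval z P * peval z P'"
    unfolding peval_eq_sum_monomial_value monomial_value_add sum_product by (simp add: ac_simps)
  finally show ?thesis .
qed

interpretation peval: comm_ring_hom "peval z"
  by unfold_locales (auto simp: peval_add peval_mult peval_one)

lemma peval_pvar [simp]: "peval z (pvar x) = z x"
  unfolding pvar_def peval_single monomial_value_def by simp

lemma peval_pconst [simp]: "peval z (pconst c) = c"
  unfolding pconst_def peval_single by simp

lemma peval_vanishes_on_zariski_closure:
  "\<forall>w\<in>S. peval w P = 0 \<Longrightarrow> \<forall>z\<in>zariski_closure S. peval z P = 0"
  unfolding zariski_closure_def by blast

section \<open>Homogeneity\<close>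

lemma mdeg_superset:
  assumes "finite S" "Poly_Mapping.keys m \<subseteq> S"
  shows "mdeg m = (\<Sum>x\<in>S. Poly_Mapping.lookup m x)"
  unfolding mdeg_def
  by (rule sum.mono_neutral_left) (use assms in \<open>auto simp: in_keys_iff\<close>)

lemma mdeg_add: "mdeg (m + m') = mdeg m + mdeg (m' :: 'v \<Rightarrow>\<^sub>0 nat)"
proof -
  let ?S = "Poly_Mapping.keys m \<union> Poly_Mapping.keys m'"
  have "mdeg (m + m') = (\<Sum>x\<in>?S. Poly_Mapping.lookup (m + m') x)"
    by (rule mdeg_superset) (use keys_add[of m m'] in auto)
  also have "\<dots> = (\<Sum>x\<in>?S. Poly_Mapping.lookup m x) + (\<Sum>x\<in>?S. Poly_Mapping.lookup m' x)"
    by (simp add: lookup_add sum.distrib)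
  also have "\<dots> = mdeg m + mdeg m'"
    by (subst (1 2) mdeg_superset[where S = ?S]) auto
  finally show ?thesis .
qed

lemma homogeneous_of_degree_zero [simp]: "homogeneous_of_degree d (0 :: 'v rpoly)"
  unfolding homogeneous_of_degree_def by simp

lemma homogeneous_of_degree_one: "homogeneous_of_degree 0 (1 :: 'v rpoly)"
  unfolding homogeneous_of_degree_def by (simp add: mdeg_def)

lemma homogeneous_of_degree_add:
  "homogeneous_of_degree d P \<Longrightarrow> homogeneous_of_degree d P'
   \<Longrightarrow> homogeneous_of_degree d (P + P' :: 'v rpoly)"
  unfolding homogeneous_of_degree_def using keys_add[of P P'] by blast

lemma homogeneous_of_degree_uminus:
  "homogeneous_of_degree d P \<Longrightarrow> homogeneous_of_degree d (- P :: 'v rpoly)"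
  unfolding homogeneous_of_degree_def by simp

lemma homogeneous_of_degree_diff:
  "homogeneous_of_degree d P \<Longrightarrow> homogeneous_of_degree d P'
   \<Longrightarrow> homogeneous_of_degree d (P - P' :: 'v rpoly)"
  using homogeneous_of_degree_add[of d P "- P'"] homogeneous_of_degree_uminus[of d P'] by simp

lemma homogeneous_of_degree_mult:
  "homogeneous_of_degree d P \<Longrightarrow> homogeneous_of_degree d' P'
   \<Longrightarrow> homogeneous_of_degree (d + d') (P * P' :: 'v rpoly)"
  unfolding homogeneous_of_degree_def using keys_mult[of P P'] by (force simp: mdeg_add)

lemma homogeneous_of_degree_sum:
  "(\<And>i. i \<in> I \<Longrightarrow> homogeneous_of_degree d (P i))
   \<Longrightarrow> homogeneous_of_degree d (\<Sum>i\<in>I. P i :: 'v rpoly)"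
  by (induction I rule: infinite_finite_induct) (auto intro: homogeneous_of_degree_add)

lemma homogeneous_of_degree_prod_linear:
  "(\<And>i. i \<in> I \<Longrightarrow> homogeneous_of_degree 1 (P i))
   \<Longrightarrow> homogeneous_of_degree (card I) (\<Prod>i\<in>I. P i :: 'v rpoly)"
proof (induction I rule: infinite_finite_induct)
  case (insert x I)
  then show ?case
    using homogeneous_of_degree_mult[of 1 "P x" "card I" "prod P I"] by simp
qed (auto intro: homogeneous_of_degree_one)

lemma homogeneous_of_degree_sign_mult:
  "homogeneous_of_degree d P \<Longrightarrow> homogeneous_of_degree d (of_int (sign \<sigma>) * P :: 'v rpoly)"
  by (cases \<sigma> rule: sign_cases) (auto intro: homogeneous_of_degree_uminus)

lemma homogeneous_of_degree_pconst_pvar: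
  "homogeneous_of_degree 1 (pconst c * pvar x :: 'v rpoly)"
  unfolding homogeneous_of_degree_def pconst_def pvar_def mult_single by (simp add: mdeg_def)

lemma homogeneous_of_degree_Dpoly: "homogeneous_of_degree r (Dpoly n j r k f L)"
  unfolding Dpoly_def det_def
  by (auto intro!: homogeneous_of_degree_sum homogeneous_of_degree_sign_mult
      homogeneous_of_degree_prod_linear[of "{0..<r}", simplified]
      homogeneous_of_degree_pconst_pvar[simplified])

section \<open>The coordinates \<open>y\<^sub>n\<^sub>,\<^sub>j\<close> on the image of \<open>\<mu>\<close>\<close>

lemma lookup_sum_single:
  assumes "finite I"
  shows "Poly_Mapping.lookup (\<Sum>i\<in>I. Poly_Mapping.single (g i) (c i)) x = (\<Sum>i\<in>{i\<in>I. g i = x}. c i)"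
  using assms by (simp add: lookup_sum lookup_single when_def sum.inter_filter)

lemma phi_poly_eq_sum_single:
  "phi_poly a d t Q K v j = (\<Sum>(m, p, q, u)\<in>{..<t} \<times> {..<d} \<times> {..<d} \<times> {..<d}.
     Poly_Mapping.single (Poly_Mapping.single (u, m) 1 + Poly_Mapping.single (p, m) 1
       + Poly_Mapping.single (q, j) 1) (v u * Amat a Q K p q))"
  unfolding phi_poly_def pconst_def pvar_def mult_single
  by (simp add: sum_distrib_left sum_distrib_right mult_single add.assoc
      sum.cartesian_product[symmetric])

lemma cubic_monomial_eq_iff:
  assumes "n \<noteq> j"
  shows "Poly_Mapping.single (u, m) 1 + Poly_Mapping.single (p, m) 1 + Poly_Mapping.single (q, j) 1
       = Poly_Mapping.single (u', n) 1 + Poly_Mapping.single (w', n) 1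
         + Poly_Mapping.single (b, j) (1 :: nat)
     \<longleftrightarrow> m = n \<and> q = b \<and> (u = u' \<and> p = w' \<or> u = w' \<and> p = u')" (is "?l = ?r \<longleftrightarrow> _")
proof
  assume "?l = ?r"
  then have "Poly_Mapping.lookup ?l x = Poly_Mapping.lookup ?r x" for x by simp
  from this[of "(u', n)"] this[of "(w', n)"] this[of "(b, j)"]
    this[of "(u, m)"] this[of "(p, m)"] this[of "(q, j)"] assms
  show "m = n \<and> q = b \<and> (u = u' \<and> p = w' \<or> u = w' \<and> p = u')"
    by (simp add: lookup_add lookup_single when_def split: if_splits)
qed (auto simp: ac_simps)

lemma lookup_phi_poly_ycoord:
  assumes "n \<noteq> j" "n < t" "u < d" "w < d" "b < d"
  shows "Poly_Mapping.lookup (phi_poly a d t Q K v j) (snd (ycoord n j u w b))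
     = (if u = w then v u * Amat a Q K u b else v u * Amat a Q K w b + v w * Amat a Q K u b)"
proof -
  let ?S = "{..<t} \<times> {..<d} \<times> {..<d} \<times> {..<d}"
  let ?mon = "\<lambda>(m, p, q, u). Poly_Mapping.single (u, m) 1 + Poly_Mapping.single (p, m) 1
       + Poly_Mapping.single (q, j) (1 :: nat)"
  have "?mon (m, p, q, u') = snd (ycoord n j u w b)
      \<longleftrightarrow> m = n \<and> q = b \<and> (u' = u \<and> p = w \<or> u' = w \<and> p = u)" for m p q u'
    unfolding ycoord_def prod.case snd_conv by (rule cubic_monomial_eq_iff[OF assms(1)])
  then have "{x\<in>?S. ?mon x = snd (ycoord n j u w b)} = {(n, w, b, u), (n, u, b, w)}"
    using assms by auto
  then show ?thesis
    by (simp add: phi_poly_eq_sum_single lookup_sum_single case_prod_beta' cong: if_cong)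
qed

lemma orderings_ycoord:
  assumes "n \<noteq> j"
  shows "orderings j (snd (ycoord n j u w b)) = (if u = w then 1 else 2)"
proof -
  have "{x\<in>Poly_Mapping.keys (snd (ycoord n j u w b)). snd x \<noteq> j} = {(u, n), (w, n)}"
    using assms
    by (auto simp: ycoord_def in_keys_iff lookup_add lookup_single when_def split: if_splits)
  then show ?thesis
    using assms by (simp add: orderings_def ycoord_def lookup_add lookup_single when_def)
qed

lemma omega_mu_ycoord:
  assumes "n \<noteq> j" "n < t" "j < t" "u < d" "w < d" "b < d"
  shows "omega u w * mu a d t Q K v (ycoord n j u w b)
     = v u * Amat a Q K w b + (if u \<noteq> w then v w * Amat a Q K u b else 0)"
proof -
  have "mu a d t Q K v (ycoord n j u w b) = Poly_Mapping.lookup (phi_poly a d t Q K v j)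
      (snd (ycoord n j u w b)) / real (orderings j (snd (ycoord n j u w b)))"
    using \<open>j < t\<close> by (simp add: mu_def ycoord_def)
  then show ?thesis
    unfolding lookup_phi_poly_ycoord[OF assms(1,2,4-6)] orderings_ycoord[OF assms(1)]
    by (simp add: omega_def)
qed

section \<open>Determinants supported on the graph of a map without cycles\<close>

lemma permutes_within_acyclic_graph_eq_id:
  assumes perm: "\<sigma> permutes S" and "finite S"
    and graph: "\<forall>i\<in>S. \<sigma> i = i \<or> \<sigma> i = f i"
    and acyclic: "\<forall>p\<in>S. \<forall>l>0. (f ^^ l) p = p \<longrightarrow> f p = p"
  shows "\<sigma> = id"
proof (rule ccontr)
  assume "\<sigma> \<noteq> id"
  then obtain p where moved: "\<sigma> p \<noteq> p" by (metis eq_id_iff)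
  then have "p \<in> S" using permutes_not_in[OF perm] by force
  have orbit_moved: "\<sigma> ((\<sigma> ^^ l) p) \<noteq> (\<sigma> ^^ l) p" for l
  proof
    assume "\<sigma> ((\<sigma> ^^ l) p) = (\<sigma> ^^ l) p"
    then have "(\<sigma> ^^ l) (\<sigma> p) = (\<sigma> ^^ l) p" by (simp add: funpow_swap1)
    with moved inj_fn[OF permutes_inj[OF perm]] show False by (simp add: inj_eq)
  qed
  have orbit: "(\<sigma> ^^ l) p = (f ^^ l) p" for l
  proof (induction l)
    case (Suc l)
    have "(\<sigma> ^^ l) p \<in> S" using permutes_in_funpow_image[OF perm \<open>p \<in> S\<close>] .
    then show ?case using graph orbit_moved[of l] Suc by auto
  qed simp
  obtain l where "\<sigma> ^^ l = id" "l > 0"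
    using permutation_is_nilpotent[OF permutes_imp_permutation[OF \<open>finite S\<close> perm]] by blast
  then have "f p = p" using orbit[of l] acyclic \<open>p \<in> S\<close> by auto
  moreover have "\<sigma> p = f p" using orbit[of 1] by simp
  ultimately show False using moved by simp
qed

lemma det_acyclic_support_eq_diag_prod:
  assumes T: "T \<in> carrier_mat r r"
    and support: "\<And>i s. i < r \<Longrightarrow> s < r \<Longrightarrow> s \<noteq> i \<Longrightarrow> s \<noteq> f i \<Longrightarrow> T $$ (i, s) = 0"
    and acyclic: "\<forall>p<r. \<forall>l>0. (f ^^ l) p = p \<longrightarrow> f p = p"
  shows "det T = (\<Prod>i<r. T $$ (i, i))"
proof -
  let ?P = "{\<sigma>. \<sigma> permutes {0..<r}}"
  let ?term = "\<lambda>\<sigma>. of_int (sign \<sigma>) * (\<Prod>i = 0..<r. T $$ (i, \<sigma> i))"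
  have "?term \<sigma> = 0" if "\<sigma> \<in> ?P - {id}" for \<sigma>
  proof -
    from that have \<sigma>: "\<sigma> permutes {0..<r}" "\<sigma> \<noteq> id" by auto
    have "\<not> (\<forall>i\<in>{0..<r}. \<sigma> i = i \<or> \<sigma> i = f i)"
      using permutes_within_acyclic_graph_eq_id[OF \<sigma>(1) finite_atLeastLessThan, of f] acyclic \<sigma>(2)
      by auto
    then obtain i where "i < r" "\<sigma> i \<noteq> i" "\<sigma> i \<noteq> f i" by auto
    moreover have "\<sigma> i < r" using permutes_in_image[OF \<sigma>(1)] \<open>i < r\<close> by simp
    ultimately have "T $$ (i, \<sigma> i) = 0" by (simp add: support)
    then have "(\<Prod>i = 0..<r. T $$ (i, \<sigma> i)) = 0" using \<open>i < r\<close> by (intro prod_zero) auto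
    then show ?thesis by simp
  qed
  then have "sum ?term (?P - {id}) = 0" by (intro sum.neutral) blast
  moreover have "det T = ?term id + sum ?term (?P - {id})"
    unfolding det_def'[OF T] by (rule sum.remove) (auto simp: finite_permutations)
  ultimately show ?thesis by (simp add: atLeast0LessThan)
qed

section \<open>The determinants \<open>D\<^sub>\<alpha>\<^sub>,\<^sub>L\<close> on the image of \<open>\<mu>\<close>\<close>

lemma peval_mu_Dpoly:
  assumes "n \<noteq> j" "n < t" "j < t"
    and k: "\<forall>p<r. k p < d" "inj_on k {..<r}" and L: "\<forall>q<r. L q < d"
    and f: "\<forall>p<r. f p < r" and acyclic: "\<forall>p<r. \<forall>l>0. (f ^^ l) p = p \<longrightarrow> f p = p"
  shows "peval (mu a d t Q K v) (Dpoly n j r k f L)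
     = (\<Prod>p<r. v (k (f p))) * det (mat r r (\<lambda>(s, q). Amat a Q K (k s) (L q)))"
proof -
  let ?A = "Amat a Q K"
  let ?T = "mat r r (\<lambda>(p, s). (if s = p then v (k (f p)) else 0)
            + (if s = f p \<and> s \<noteq> p then v (k p) else 0))"
  let ?B = "mat r r (\<lambda>(s, q). ?A (k s) (L q))"
  let ?M = "mat r r (\<lambda>(p, q).
      pconst (omega (k (f p)) (k p)) * pvar (ycoord n j (k (f p)) (k p) (L q)))"
  have factor: "map_mat (peval (mu a d t Q K v)) ?M = ?T * ?B"
  proof (rule eq_matI)
    fix p q assume "p < dim_row (?T * ?B)" "q < dim_col (?T * ?B)"
    then have "p < r" "q < r" by auto
    moreover have "k (f p) = k p \<longleftrightarrow> f p = p"
      using k f \<open>p < r\<close> by (auto dest: inj_onD)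
    ultimately show "map_mat (peval (mu a d t Q K v)) ?M $$ (p, q) = (?T * ?B) $$ (p, q)"
      using omega_mu_ycoord[OF assms(1-3), of "k (f p)" d "k p" "L q" a Q K v] k f L
      by (simp add: peval_mult scalar_prod_def distrib_right sum.distrib
          if_distrib[of "\<lambda>x. x * _"] cong: if_cong conj_cong)
  qed auto
  have "det ?T = (\<Prod>p<r. v (k (f p)))"
    by (subst det_acyclic_support_eq_diag_prod[OF _ _ acyclic]) auto
  then have "det (?T * ?B) = (\<Prod>p<r. v (k (f p))) * det ?B"
    by (simp add: det_mult[of ?T r ?B])
  then show ?thesis
    unfolding Dpoly_def peval.hom_det[symmetric] factor .
qed

lemma peval_mu_Dpoly_minor:
  assumes "n \<noteq> j" "n < t" "j < t" "\<forall>p<r. k p < d" "inj_on k {..<r}"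
    and L: "\<forall>q<r. L q < d" and L': "\<forall>q<r. L' q < d"
    and f: "admissible_f r \<alpha> f" and g: "admissible_f r \<beta> g"
  shows "peval (mu a d t Q K v)
     (Dpoly n j r k f L * Dpoly n j r k g L' - Dpoly n j r k g L * Dpoly n j r k f L') = 0"
proof -
  have D: "peval (mu a d t Q K v) (Dpoly n j r k h M)
      = (\<Prod>p<r. v (k (h p))) * det (mat r r (\<lambda>(s, q). Amat a Q K (k s) (M q)))"
    if "admissible_f r \<gamma> h" "\<forall>q<r. M q < d" for \<gamma> h M
    using that by (intro peval_mu_Dpoly[OF assms(1-5)]) (auto simp: admissible_f_def)
  show ?thesis
    unfolding peval.hom_minus peval_mult D[OF f L] D[OF f L'] D[OF g L] D[OF g L']
    by (simp only: mult_ac diff_self)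
qed

theorem mainTheorem13:
  fixes a d t j n r :: nat and k L L' :: "nat \<Rightarrow> nat"
    and F :: "(nat \<Rightarrow> nat) \<Rightarrow> (nat \<Rightarrow> nat)"
  assumes "t > 1" and "j < t" and "n < t" and "n \<noteq> j"
    and "2 \<le> r" and "r \<le> min a d"
    and "\<forall>p<r. k p < d" and "inj_on k {..<r}"
    and "\<forall>q<r. L q < d" and "inj_on L {..<r}"
    and "\<forall>q<r. L' q < d" and "inj_on L' {..<r}"
    and "\<exists>q<r. L q \<noteq> L' q"
    and "\<forall>alpha\<in>multiidx r. admissible_f r alpha (F alpha)"
  shows "\<forall>alpha\<in>multiidx r. \<forall>beta\<in>multiidx r.
     (let P = Dpoly n j r k (F alpha) L * Dpoly n j r k (F beta) L'
            - Dpoly n j r k (F beta) L * Dpoly n j r k (F alpha) L'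
      in homogeneous_of_degree (2 * r) P \<and> (\<forall>z\<in>attention_variety a d t. peval z P = 0))"
proof (intro ballI)
  fix alpha beta assume "alpha \<in> multiidx r" "beta \<in> multiidx r"
  with assms(14) have "admissible_f r alpha (F alpha)" "admissible_f r beta (F beta)" by blast+
  note minor_vanishes = peval_mu_Dpoly_minor[OF assms(4,3,2,7,8,9,11) this]
  let ?P = "Dpoly n j r k (F alpha) L * Dpoly n j r k (F beta) L'
            - Dpoly n j r k (F beta) L * Dpoly n j r k (F alpha) L'"
  have "homogeneous_of_degree (r + r) ?P"
    by (intro homogeneous_of_degree_diff homogeneous_of_degree_mult homogeneous_of_degree_Dpoly)
  moreover have "\<forall>z\<in>attention_variety a d t. peval z ?P = 0"
    unfolding attention_variety_def
    by (intro peval_vanishes_on_zariski_closure) (simp add: split_beta minor_vanishes)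
  ultimately show "let P = ?P in
      homogeneous_of_degree (2 * r) P \<and> (\<forall>z\<in>attention_variety a d t. peval z P = 0)"
    by (simp add: mult_2)
qed

end
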